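(* For every sequence $(\xi_i)_{i\in\mathbb N}$ of terms in $\Lambda$, there exists $\phi\in\Lambda$ such that: (1) $\phi\underline i\succ\xi_i$ for every $i\in\mathbb N$; (2) for every $U\in\Lambda$ such that $U\phi\Vdash\bot$, there exists $k\in\mathbb N$ such that $U\psi\Vdash\bot$ for every $\psi\in\Lambda$ satisfying $\psi\underline i\succ\xi_i$ for every $i<k$.
   Context: Fix an integer $N\ge 0$. The set $\Lambda$ of terms is the smallest set containing the constants $B,C,I,K,W,cc,A$ and $p,q_0,\dots,q_N$, closed under application $(\xi)\eta$ (written $\xi\eta$), and containing, for each sequence $(\xi_i)_{i\in\mathbb N}$ of closed terms (no occurrence of $p,q_0,\dots,q_N$), a constant $\bigwedge_i\xi_i$ (injectively, well-founded). Stacks: finite sequences $t_0\cdot\ldots\cdot t_{n-1}\cdot\pi_0$ of terms, $\pi_0$ the empty stack; $\Pi$ the set of stacks. $\ell_t=((C)(B)CB)t$, $k_{\pi_0}=A$, $k_{t\cdot\pi}=(\ell_t)k_\pi$; $\sigma=(BW)(C)(B)BB$, $\underline0=(K)I$, $\underline{n+1}=(\sigma)\underline n$. Execution $\succ$: least preorder on $\Lambda\times\Pi$ with $(\xi)\eta\star\pi\succ\xi\star\eta\cdot\pi$; $B\star\xi\cdot\eta\cdot\zeta\cdot\pi\succ\xi\star(\eta)\zeta\cdot\pi$; $C\star\xi\cdot\eta\cdot\zeta\cdot\pi\succ\xi\star\zeta\cdot\eta\cdot\pi$; $I\star\xi\cdot\pi\succ\xi\star\pi$; $K\star\xi\cdot\eta\cdot\pi\succ\xi\star\pi$;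 $W\star\xi\cdot\eta\cdot\pi\succ\xi\star\eta\cdot\eta\cdot\pi$; $cc\star\xi\cdot\pi\succ\xi\star k_\pi\cdot\pi$; $A\star\xi\cdot\pi\succ\xi\star\pi_0$; $\bigwedge_i\xi_i\star\underline n\cdot\pi\succ\xi_n\star\pi$. For terms, $\xi\succ\eta$ means $\xi\star\pi\succ\eta\star\pi$ for every $\pi\in\Pi$. Pole $\perp\!\!\!\perp=\{\xi\star\pi:\exists\varpi,\ \xi\star\pi\succ p\star\varpi\}$. $\xi\Vdash\bot$ means $\xi\star\pi\in\perp\!\!\!\perp$ for every $\pi\in\Pi$. *)

theory Defs
  imports Main
begin

text \<open>Terms of \<Lambda>. The constructor Big f is the constant \<And>_i f i; well-formedness
  (all f i closed terms of \<Lambda>, and q_j only for j \<le> N) is imposed by wf_trm.\<close>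
datatype trm = cB | cC | cI | cK | cW | ccc | cA | cP | cQ nat
  | App trm trm | Big "nat \<Rightarrow> trm"

inductive closed_trm :: "trm \<Rightarrow> bool" where
  "closed_trm cB" | "closed_trm cC" | "closed_trm cI" | "closed_trm cK"
| "closed_trm cW" | "closed_trm ccc" | "closed_trm cA"
| "closed_trm s \<Longrightarrow> closed_trm t \<Longrightarrow> closed_trm (App s t)"
| "(\<And>i. closed_trm (f i)) \<Longrightarrow> closed_trm (Big f)"

inductive wf_trm :: "nat \<Rightarrow> trm \<Rightarrow> bool" for N :: nat where
  "wf_trm N cB" | "wf_trm N cC" | "wf_trm N cI" | "wf_trm N cK"
| "wf_trm N cW" | "wf_trm N ccc" | "wf_trm N cA" | "wf_trm N cP"
| "j \<le> N \<Longrightarrow> wf_trm N (cQ j)"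
| "wf_trm N s \<Longrightarrow> wf_trm N t \<Longrightarrow> wf_trm N (App s t)"
| "(\<And>i. wf_trm N (f i) \<and> closed_trm (f i)) \<Longrightarrow> wf_trm N (Big f)"

text \<open>Stacks are lists of terms (head = top); the empty list is \<pi>_0.\<close>
definition wf_stack :: "nat \<Rightarrow> trm list \<Rightarrow> bool" where
  "wf_stack N \<pi> \<longleftrightarrow> (\<forall>t\<in>set \<pi>. wf_trm N t)"

definition ell :: "trm \<Rightarrow> trm" where
  "ell t = App (App cC (App (App cB cC) cB)) t"

fun kont :: "trm list \<Rightarrow> trm" where
  "kont [] = cA"
| "kont (t # \<pi>) = App (ell t) (kont \<pi>)"

definition sigma :: trm where
  "sigma = App (App cB cW) (App cC (App (App cB cB) cB))"

fun num :: "nat \<Rightarrow> trm" where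
  "num 0 = App cK cI"
| "num (Suc n) = App sigma (num n)"

inductive step :: "trm \<times> trm list \<Rightarrow> trm \<times> trm list \<Rightarrow> bool" where
  push: "step (App s t, \<pi>) (s, t # \<pi>)"
| B: "step (cB, x # y # z # \<pi>) (x, App y z # \<pi>)"
| C: "step (cC, x # y # z # \<pi>) (x, z # y # \<pi>)"
| I: "step (cI, x # \<pi>) (x, \<pi>)"
| K: "step (cK, x # y # \<pi>) (x, \<pi>)"
| W: "step (cW, x # y # \<pi>) (x, y # y # \<pi>)"
| cc: "step (ccc, x # \<pi>) (x, kont \<pi> # \<pi>)"
| A: "step (cA, x # \<pi>) (x, [])"
| Big: "step (Big f, num n # \<pi>) (f n, \<pi>)"

abbreviation exec :: "trm \<times> trm list \<Rightarrow> trm \<times> trm list \<Rightarrow> bool" where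
  "exec \<equiv> step\<^sup>*\<^sup>*"

definition red_trm :: "nat \<Rightarrow> trm \<Rightarrow> trm \<Rightarrow> bool" where
  "red_trm N s t \<longleftrightarrow> (\<forall>\<pi>. wf_stack N \<pi> \<longrightarrow> exec (s, \<pi>) (t, \<pi>))"

definition in_pole :: "trm \<times> trm list \<Rightarrow> bool" where
  "in_pole c \<longleftrightarrow> (\<exists>\<rho>. exec c (cP, \<rho>))"

definition realizes_bot :: "nat \<Rightarrow> trm \<Rightarrow> bool" where
  "realizes_bot N s \<longleftrightarrow> (\<forall>\<pi>. wf_stack N \<pi> \<longrightarrow> in_pole (s, \<pi>))"

end

theory Submission
  imports Defs
begin

text \<open>
  Let \<zeta>_i be a closed combinatory abstraction of \<xi>_i over p, q_0, \<dots>, q_N and let \<phi> push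
  these constants beneath its argument and then call \<And>_i \<zeta>_i; thus \<phi> applied to the
  numeral of i executes \<xi>_i.
  If U \<phi> \<star> \<pi>_0 reaches p, that run performs finitely many \<And>-steps, all with indices below
  some k. The same run with \<phi> replaced by any \<psi> that behaves like \<phi> on i < k, with A
  replaced by continuations k_\<tau> and with all stacks extended by an arbitrary tail, still
  reaches p, because \<phi> is only ever consumed through its arguments i < k.
\<close>

lemmas exec_stepI = converse_rtranclp_into_rtranclp[of step]

lemma num_eq_iff [simp]: "num i = num j \<longleftrightarrow> i = j"
proof (induction i arbitrary: j)
  case 0 then show ?case by (cases j) (auto simp: sigma_def)
next
  case (Suc i) then show ?case by (cases j) (auto simp: sigma_def)
qed

lemma step_deterministic: "step c d \<Longrightarrow> step c e \<Longrightarrow> d = e"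
  by (induction rule: step.induct) (auto elim: step.cases)

lemma exec_after_step: "exec c d \<Longrightarrow> step c c1 \<Longrightarrow> c \<noteq> d \<Longrightarrow> exec c1 d"
  by (induction rule: converse_rtranclp_induct) (auto dest: step_deterministic)

lemma exec_foldl_App: "exec (foldl App x \<tau>, \<sigma>) (x, \<tau> @ \<sigma>)"
proof (induction \<tau> arbitrary: \<sigma> rule: rev_induct)
  case (snoc t \<tau>)
  show ?case by simp (rule exec_stepI, rule step.intros, use snoc in simp)
qed simp

lemma exec_kont: "exec (kont \<tau>, x # \<sigma>) (x, \<tau>)"
proof -
  have "exec (kont \<tau>, x # \<sigma>) (foldl App x \<tau>, [])"
  proof (induction \<tau> arbitrary: x)
    case (Cons t \<tau>)
    show ?case unfolding kont.simps ell_def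
      by (rule exec_stepI, rule step.intros)+ (use Cons in simp)
  qed (auto intro: exec_stepI step.intros)
  then show ?thesis using exec_foldl_App[of x \<tau> "[]"] by simp
qed

lemma in_pole_exec: "exec c d \<Longrightarrow> in_pole d \<Longrightarrow> in_pole c"
  unfolding in_pole_def by (meson rtranclp_trans)

lemma wf_trm_App_iff [simp]: "wf_trm N (App s t) \<longleftrightarrow> wf_trm N s \<and> wf_trm N t"
  by (auto elim: wf_trm.cases intro: wf_trm.intros)

lemma wf_kont: "wf_stack N \<pi> \<Longrightarrow> wf_trm N (kont \<pi>)"
  by (induction \<pi>) (auto simp: wf_stack_def ell_def intro: wf_trm.intros)

lemma wf_step:
  "step c d \<Longrightarrow> wf_trm N (fst c) \<Longrightarrow> wf_stack N (snd c) \<Longrightarrow>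
   wf_trm N (fst d) \<and> wf_stack N (snd d)"
  by (induction rule: step.induct)
     (auto simp: wf_stack_def elim: wf_trm.cases intro: wf_kont[unfolded wf_stack_def])

lemma wf_exec:
  "exec c d \<Longrightarrow> wf_trm N (fst c) \<Longrightarrow> wf_stack N (snd c) \<Longrightarrow>
   wf_trm N (fst d) \<and> wf_stack N (snd d)"
  by (induction rule: rtranclp_induct) (auto dest: wf_step)

section \<open>Combinatory abstraction\<close>

definition cabs_const :: "trm \<Rightarrow> trm" where
  "cabs_const M = App (App cB cK) (App (App cC cI) M)"

definition app_cont :: trm where
  "app_cont = App cC (App (App cB cC) (App cC cB))"

definition cabs_app :: "trm \<Rightarrow> trm \<Rightarrow> trm" where
  "cabs_app a b = App cC (App cW (App a (App cC (App b app_cont))))"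

fun cabs :: "trm \<Rightarrow> trm \<Rightarrow> trm" where
  "cabs x (App s t) = cabs_app (cabs x s) (cabs x t)"
| "cabs x M = (if M = x then cI else cabs_const M)"

lemma exec_cabs_const: "exec (cabs_const M, k # x # \<sigma>) (k, M # \<sigma>)"
  unfolding cabs_const_def by (rule exec_stepI, rule step.intros)+ simp

lemma exec_app_cont: "exec (app_cont, t # s # k # \<sigma>) (k, App s t # \<sigma>)"
  unfolding app_cont_def by (rule exec_stepI, rule step.intros)+ simp

lemma exec_cabs:
  assumes "\<And>s t. x \<noteq> App s t"
  shows "exec (cabs x M, k # x # \<sigma>) (k, M # \<sigma>)"
  using assms
proof (induction x M arbitrary: k \<sigma> rule: cabs.induct)
  case (1 x s t)
  let ?ks = "App cC (App (cabs x t) app_cont)"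
  have s: "exec (cabs x s, ?ks # x # x # k # \<sigma>) (?ks, s # x # k # \<sigma>)"
    using 1 by blast
  have t: "exec (cabs x t, app_cont # x # s # k # \<sigma>) (app_cont, t # s # k # \<sigma>)"
    using 1 by blast
  show ?case unfolding cabs.simps cabs_app_def
    apply (rule exec_stepI, rule step.intros)+
    apply (rule rtranclp_trans[OF s])
    apply (rule exec_stepI, rule step.intros)+
    apply (rule rtranclp_trans[OF t])
    by (rule exec_app_cont)
qed (auto intro: exec_cabs_const exec_stepI step.intros)

fun cabs_list :: "trm list \<Rightarrow> trm \<Rightarrow> trm" where
  "cabs_list [] M = M"
| "cabs_list (v # vs) M = App (cabs v (cabs_list vs M)) cI"

lemma exec_cabs_list:
  assumes "\<And>v s t. v \<in> set vs \<Longrightarrow> v \<noteq> App s t"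
  shows "exec (cabs_list vs M, vs @ \<sigma>) (M, \<sigma>)"
  using assms
proof (induction vs)
  case (Cons v vs)
  have "exec (cabs v (cabs_list vs M), cI # v # vs @ \<sigma>) (cI, cabs_list vs M # vs @ \<sigma>)"
    using Cons.prems by (intro exec_cabs) auto
  then show ?case
    apply simp
    apply (rule exec_stepI, rule step.intros)
    apply (erule rtranclp_trans)
    apply (rule exec_stepI, rule step.intros)
    using Cons by auto
qed simp

fun consts_within :: "trm set \<Rightarrow> trm \<Rightarrow> bool" where
  "consts_within V (App s t) \<longleftrightarrow> consts_within V s \<and> consts_within V t"
| "consts_within V cP \<longleftrightarrow> cP \<in> V"
| "consts_within V (cQ j) \<longleftrightarrow> cQ j \<in> V"
| "consts_within V (Big f) \<longleftrightarrow> closed_trm (Big f)"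
| "consts_within V _ \<longleftrightarrow> True"

lemma closed_trm_if_consts_within_empty: "consts_within {} M \<Longrightarrow> closed_trm M"
  by (induction M) (auto intro: closed_trm.intros)

lemma consts_within_cabs: "consts_within V M \<Longrightarrow> consts_within (V - {x}) (cabs x M)"
  by (induction x M rule: cabs.induct) (auto simp: cabs_const_def cabs_app_def app_cont_def)

lemma consts_within_cabs_list:
  "consts_within V M \<Longrightarrow> consts_within (V - set vs) (cabs_list vs M)"
proof (induction vs arbitrary: V)
  case (Cons v vs)
  then have "consts_within (V - set vs - {v}) (cabs v (cabs_list vs M))"
    by (intro consts_within_cabs) blast
  moreover have "V - set (v # vs) = V - set vs - {v}" by auto
  ultimately show ?case by simp
qed simp

lemma wf_cabs: "wf_trm N M \<Longrightarrow> wf_trm N (cabs x M)"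
  by (induction x M rule: cabs.induct)
     (auto simp: cabs_const_def cabs_app_def app_cont_def intro: wf_trm.intros)

lemma wf_cabs_list: "wf_trm N M \<Longrightarrow> wf_trm N (cabs_list vs M)"
  by (induction vs) (auto intro: wf_cabs wf_trm.intros)

definition free_consts :: "nat \<Rightarrow> trm list" where
  "free_consts N = cP # map cQ [0..<Suc N]"

lemma wf_free_consts: "v \<in> set (free_consts N) \<Longrightarrow> wf_trm N v"
  by (auto simp: free_consts_def intro: wf_trm.intros)

lemma consts_within_free_consts: "wf_trm N M \<Longrightarrow> consts_within (set (free_consts N)) M"
  by (induction rule: wf_trm.induct) (auto simp: free_consts_def intro: closed_trm.intros)

definition zeta :: "nat \<Rightarrow> (nat \<Rightarrow> trm) \<Rightarrow> nat \<Rightarrow> trm" where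
  "zeta N \<xi> i = cabs_list (free_consts N) (\<xi> i)"

lemma exec_zeta: "exec (zeta N \<xi> i, free_consts N @ \<sigma>) (\<xi> i, \<sigma>)"
  unfolding zeta_def by (rule exec_cabs_list) (auto simp: free_consts_def)

lemma wf_zeta: "wf_trm N (\<xi> i) \<Longrightarrow> wf_trm N (zeta N \<xi> i) \<and> closed_trm (zeta N \<xi> i)"
  unfolding zeta_def
  using consts_within_cabs_list[OF consts_within_free_consts, of N "\<xi> i" "free_consts N"]
  by (auto intro: wf_cabs_list closed_trm_if_consts_within_empty)

definition ins_second :: "trm \<Rightarrow> trm \<Rightarrow> trm" where
  "ins_second Y c = App (App cC Y) c"

lemma exec_foldl_ins_second: "exec (foldl ins_second Y vs, n # \<sigma>) (Y, n # vs @ \<sigma>)"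
proof (induction vs arbitrary: Y \<sigma>)
  case (Cons v vs)
  show ?case
    apply simp
    apply (rule rtranclp_trans[OF Cons])
    unfolding ins_second_def by (rule exec_stepI, rule step.intros)+ simp
qed simp

lemma wf_foldl_ins_second:
  "wf_trm N Y \<Longrightarrow> \<forall>v\<in>set vs. wf_trm N v \<Longrightarrow> wf_trm N (foldl ins_second Y vs)"
  by (induction vs arbitrary: Y) (simp_all add: ins_second_def wf_trm.intros)

definition phi :: "nat \<Rightarrow> (nat \<Rightarrow> trm) \<Rightarrow> trm" where
  "phi N \<xi> = foldl ins_second (Big (zeta N \<xi>)) (free_consts N)"

lemma wf_phi: "(\<And>i. wf_trm N (\<xi> i)) \<Longrightarrow> wf_trm N (phi N \<xi>)"
  unfolding phi_def
  by (intro wf_foldl_ins_second wf_trm.intros) (auto simp: wf_zeta wf_free_consts)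

lemma exec_phi_Big: "exec (phi N \<xi>, n # \<sigma>) (Big (zeta N \<xi>), n # free_consts N @ \<sigma>)"
  unfolding phi_def by (rule exec_foldl_ins_second)

lemma exec_phi_num: "exec (App (phi N \<xi>) (num i), \<sigma>) (\<xi> i, \<sigma>)"
  apply (rule exec_stepI, rule step.intros)
  apply (rule rtranclp_trans[OF exec_phi_Big])
  apply (rule exec_stepI, rule step.intros)
  by (rule exec_zeta)

lemma exec_phi_Nil_stuck: "\<exists>Y. exec (phi N \<xi>, []) (cC, [Y, cQ N])"
  unfolding phi_def free_consts_def ins_second_def
  by (auto intro!: exec_stepI step.intros)

section \<open>Runs to p with bounded \<And>-indices\<close>

inductive bounded_run :: "nat \<Rightarrow> nat \<Rightarrow> trm \<times> trm list \<Rightarrow> bool" for k where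
  at_p: "bounded_run k 0 (cP, \<rho>)"
| step: "step c d \<Longrightarrow> bounded_run k n d \<Longrightarrow> (\<forall>f i \<sigma>. c = (Big f, num i # \<sigma>) \<longrightarrow> i < k) \<Longrightarrow>
    bounded_run k (Suc n) c"

lemma bounded_run_step: "bounded_run k n c \<Longrightarrow> step c d \<Longrightarrow> \<exists>m. n = Suc m \<and> bounded_run k m d"
  by (induction rule: bounded_run.cases) (auto elim: step.cases dest: step_deterministic)

lemma bounded_run_exec: "exec c d \<Longrightarrow> bounded_run k n c \<Longrightarrow> \<exists>m\<le>n. bounded_run k m d"
proof (induction rule: rtranclp_induct)
  case (step d e)
  then obtain m where "m \<le> n" "bounded_run k m d" by blast
  with bounded_run_step[OF _ step(2)] obtain m' where "m = Suc m'" "bounded_run k m' e"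
    by blast
  with \<open>m \<le> n\<close> show ?case by (intro exI[of _ m']) auto
qed auto

lemma bounded_run_Big:
  assumes "bounded_run k n (Big f, t # \<sigma>)"
  obtains i m where "i < k" "t = num i" "n = Suc m" "bounded_run k m (f i, \<sigma>)"
  using assms
proof (cases rule: bounded_run.cases)
  case (step d m)
  then obtain i where "t = num i" "d = (f i, \<sigma>)" by (auto elim: step.cases)
  with step that show ?thesis by blast
qed

lemma bounded_run_mono: "bounded_run k n c \<Longrightarrow> k \<le> k' \<Longrightarrow> bounded_run k' n c"
  by (induction rule: bounded_run.induct) (auto intro: bounded_run.intros)

lemma bounded_run_if_exec_to_p: "exec c (cP, \<rho>) \<Longrightarrow> \<exists>k n. bounded_run k n c"
proof (induction rule: converse_rtranclp_induct)
  case base then show ?case by (auto intro: bounded_run.at_p)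
next
  case (step c d)
  then obtain k n where "bounded_run k n d" by blast
  obtain k0 where k0: "\<forall>f i \<sigma>. c = (Big f, num i # \<sigma>) \<longrightarrow> i < k0"
    using step(1) by (cases rule: step.cases) auto
  have "bounded_run (max k k0) (Suc n) c"
    using step(1) bounded_run_mono[OF \<open>bounded_run k n d\<close>] k0
    by (intro bounded_run.step) auto
  then show ?case by blast
qed

lemma bounded_run_phi:
  assumes "bounded_run k n (phi N \<xi>, \<rho>)"
  shows "\<exists>i \<rho>0 m. \<rho> = num i # \<rho>0 \<and> i < k \<and> m < n \<and> bounded_run k m (\<xi> i, \<rho>0)"
proof (cases \<rho>)
  case Nil
  obtain Y where "exec (phi N \<xi>, []) (cC, [Y, cQ N])"
    using exec_phi_Nil_stuck by blast
  with assms Nil obtain m where "bounded_run k m (cC, [Y, cQ N])"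
    using bounded_run_exec by blast
  then show ?thesis by (cases rule: bounded_run.cases) (auto elim: step.cases)
next
  case (Cons t \<rho>0)
  then obtain m2 where "m2 \<le> n" "bounded_run k m2 (Big (zeta N \<xi>), t # free_consts N @ \<rho>0)"
    using bounded_run_exec[OF exec_phi_Big] assms by blast
  then obtain i m3 where i: "i < k" "t = num i" "m2 = Suc m3"
    and "bounded_run k m3 (zeta N \<xi> i, free_consts N @ \<rho>0)"
    by (auto elim: bounded_run_Big)
  then obtain m where "m \<le> m3" "bounded_run k m (\<xi> i, \<rho>0)"
    using bounded_run_exec[OF exec_zeta] by blast
  with i \<open>m2 \<le> n\<close> Cons show ?thesis
    by (intro exI[of _ i] exI[of _ \<rho>0] exI[of _ m]) auto
qed

section \<open>Replaying a run with \<psi> in place of \<phi>\<close>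

text \<open>
  The replayed run carries an extra stack tail \<tau>, so A (which empties the stack) must be
  matched by the continuation k_\<tau>, and the continuations captured by cc acquire \<tau> as well.
\<close>

inductive sim :: "trm \<Rightarrow> trm \<Rightarrow> trm \<Rightarrow> trm \<Rightarrow> bool" for \<phi> \<psi> where
  refl: "sim \<phi> \<psi> t t"
| App: "sim \<phi> \<psi> s s' \<Longrightarrow> sim \<phi> \<psi> u u' \<Longrightarrow> sim \<phi> \<psi> (App s u) (App s' u')"
| phi: "sim \<phi> \<psi> \<phi> \<psi>"
| A_kont: "sim \<phi> \<psi> cA (kont \<tau>)"

inductive sim_stack :: "trm \<Rightarrow> trm \<Rightarrow> trm list \<Rightarrow> trm list \<Rightarrow> bool" for \<phi> \<psi> where
  Nil: "sim_stack \<phi> \<psi> [] \<tau>"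
| Cons: "sim \<phi> \<psi> t t' \<Longrightarrow> sim_stack \<phi> \<psi> \<rho> \<rho>' \<Longrightarrow> sim_stack \<phi> \<psi> (t # \<rho>) (t' # \<rho>')"

inductive_cases sim_stack_ConsE: "sim_stack \<phi> \<psi> (t # \<rho>) \<sigma>"

fun pure :: "trm \<Rightarrow> bool" where
  "pure (App s t) \<longleftrightarrow> pure s \<and> pure t"
| "pure cA \<longleftrightarrow> False"
| "pure (Big f) \<longleftrightarrow> False"
| "pure _ \<longleftrightarrow> True"

lemma pure_num: "pure (num i)"
  by (induction i) (auto simp: sigma_def)

lemma pure_foldl_ins_second: "pure (foldl ins_second Y vs) \<Longrightarrow> pure Y"
  by (induction vs arbitrary: Y) (fastforce simp: ins_second_def)+

lemma not_pure_phi: "\<not> pure (phi N \<xi>)"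
  unfolding phi_def by (metis pure_foldl_ins_second pure.simps(3))

lemma sim_pure: "sim \<phi> \<psi> t t' \<Longrightarrow> pure t \<Longrightarrow> \<not> pure \<phi> \<Longrightarrow> t' = t"
  by (induction rule: sim.induct) auto

lemma sim_kont: "sim_stack \<phi> \<psi> \<rho> \<sigma> \<Longrightarrow> sim \<phi> \<psi> (kont \<rho>) (kont \<sigma>)"
  by (induction rule: sim_stack.induct) (auto simp: ell_def intro: sim.intros)

lemma sim_step_same_head:
  assumes "step (t, \<rho>) (u, \<rho>1)" "sim_stack \<phi> \<psi> \<rho> \<sigma>" "\<not> pure \<phi>"
  shows "\<exists>u' \<sigma>1. step (t, \<sigma>) (u', \<sigma>1) \<and> sim \<phi> \<psi> u u' \<and> sim_stack \<phi> \<psi> \<rho>1 \<sigma>1"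
  using assms(1)
proof (cases rule: step.cases)
  case (Big f n)
  with assms(2) obtain y \<sigma>' where "\<sigma> = y # \<sigma>'" "sim \<phi> \<psi> (num n) y" "sim_stack \<phi> \<psi> \<rho>1 \<sigma>'"
    by (auto elim: sim_stack_ConsE)
  moreover from \<open>sim \<phi> \<psi> (num n) y\<close> have "y = num n"
    using sim_pure pure_num assms(3) by blast
  ultimately show ?thesis using Big by (auto intro: step.intros sim.intros)
qed (use assms(2) in
    \<open>auto elim!: sim_stack_ConsE intro: step.intros sim.intros sim_stack.intros sim_kont\<close>)

lemma sim_step:
  assumes "step (t, \<rho>) (u, \<rho>1)" "sim \<phi> \<psi> t t'" "sim_stack \<phi> \<psi> \<rho> \<sigma>"
    and "\<not> (t = \<phi> \<and> t' = \<psi>)" "\<not> pure \<phi>"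
  shows "\<exists>u' \<sigma>1. exec (t', \<sigma>) (u', \<sigma>1) \<and> sim \<phi> \<psi> u u' \<and> sim_stack \<phi> \<psi> \<rho>1 \<sigma>1"
  using assms(2)
proof (cases rule: sim.cases)
  case refl
  with sim_step_same_head[OF assms(1,3,5)] show ?thesis by blast
next
  case (App s s' v v')
  with assms(1,3) show ?thesis
    by (auto elim: step.cases intro!: exec_stepI step.intros sim_stack.intros)
next
  case phi
  with assms(4) show ?thesis by blast
next
  case (A_kont \<tau>)
  with assms(1,3) obtain x x' \<sigma>' where "u = x" "\<rho>1 = []" "\<sigma> = x' # \<sigma>'" "sim \<phi> \<psi> x x'"
    by (auto elim!: step.cases sim_stack_ConsE)
  with A_kont exec_kont show ?thesis by (blast intro: sim_stack.Nil)
qed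

lemma in_pole_if_red_trm:
  assumes "red_trm N (App s t) u" "wf_stack N \<sigma>" "in_pole (u, \<sigma>)"
  shows "in_pole (s, t # \<sigma>)"
proof -
  from assms obtain r where "exec (App s t, \<sigma>) (cP, r)"
    unfolding red_trm_def in_pole_def by (meson rtranclp_trans)
  then have "exec (s, t # \<sigma>) (cP, r)"
    by (rule exec_after_step) (auto intro: step.intros)
  then show ?thesis unfolding in_pole_def by blast
qed

lemma in_pole_if_sim_bounded_run:
  assumes phi_run: "\<And>\<rho> n. bounded_run k n (\<phi>, \<rho>) \<Longrightarrow>
      \<exists>i \<rho>0 m. \<rho> = num i # \<rho>0 \<and> i < k \<and> m < n \<and> bounded_run k m (\<xi> i, \<rho>0)"
    and psi: "\<And>i. i < k \<Longrightarrow> red_trm N (App \<psi> (num i)) (\<xi> i)"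
    and "\<not> pure \<phi>" and wf_\<xi>: "\<And>i. wf_trm N (\<xi> i)"
  shows "bounded_run k n (t, \<rho>) \<Longrightarrow> sim \<phi> \<psi> t t' \<Longrightarrow> sim_stack \<phi> \<psi> \<rho> \<sigma> \<Longrightarrow>
    wf_trm N t' \<Longrightarrow> wf_stack N \<sigma> \<Longrightarrow> in_pole (t', \<sigma>)"
proof (induction n arbitrary: t \<rho> t' \<sigma> rule: less_induct)
  case (less n)
  show ?case
  proof (cases "t = \<phi> \<and> t' = \<psi>")
    case True
    with phi_run less.prems(1) obtain i \<rho>0 m
      where i: "\<rho> = num i # \<rho>0" "i < k" "m < n" "bounded_run k m (\<xi> i, \<rho>0)"
      by blast
    with less.prems(3) obtain y \<sigma>0
      where \<sigma>: "\<sigma> = y # \<sigma>0" "sim \<phi> \<psi> (num i) y" "sim_stack \<phi> \<psi> \<rho>0 \<sigma>0"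
      by (auto elim: sim_stack_ConsE)
    have "y = num i"
      using \<sigma>(2) sim_pure pure_num \<open>\<not> pure \<phi>\<close> by blast
    have "wf_stack N \<sigma>0"
      using less.prems(5) \<sigma>(1) by (simp add: wf_stack_def)
    then have "in_pole (\<xi> i, \<sigma>0)"
      using less.IH[OF i(3,4) sim.refl \<sigma>(3) wf_\<xi>] by blast
    then have "in_pole (\<psi>, num i # \<sigma>0)"
      by (rule in_pole_if_red_trm[OF psi[OF i(2)] \<open>wf_stack N \<sigma>0\<close>])
    with True \<sigma>(1) \<open>y = num i\<close> show ?thesis by simp
  next
    case False
    from less.prems(1) show ?thesis
    proof (cases rule: bounded_run.cases)
      case at_p
      with less.prems(2) \<open>\<not> pure \<phi>\<close> have "t' = cP" using sim_pure by auto
      then show ?thesis unfolding in_pole_def by blast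
    next
      case (step d m)
      obtain u \<rho>1 where d: "d = (u, \<rho>1)" by fastforce
      obtain u' \<sigma>1 where u': "exec (t', \<sigma>) (u', \<sigma>1)" "sim \<phi> \<psi> u u'" "sim_stack \<phi> \<psi> \<rho>1 \<sigma>1"
        using sim_step[OF step(2)[unfolded d] less.prems(2,3) False \<open>\<not> pure \<phi>\<close>] by blast
      moreover have "wf_trm N u'" "wf_stack N \<sigma>1"
        using wf_exec[OF u'(1)] less.prems(4,5) by auto
      ultimately have "in_pole (u', \<sigma>1)"
        using less.IH[of m u \<rho>1 u' \<sigma>1] step d by simp
      then show ?thesis by (rule in_pole_exec[OF u'(1)])
    qed
  qed
qed

lemma bounded_run_if_realizes_bot:
  assumes "realizes_bot N s"
  shows "\<exists>k n. bounded_run k n (s, [])"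
proof -
  from assms obtain \<rho> where "exec (s, []) (cP, \<rho>)"
    unfolding realizes_bot_def wf_stack_def in_pole_def by (auto dest: spec[of _ "[]"])
  then show ?thesis by (rule bounded_run_if_exec_to_p)
qed

lemma realizes_bot_App_if_bounded_run:
  assumes "bounded_run k n (App U (phi N \<xi>), [])" "\<And>i. wf_trm N (\<xi> i)"
    and "wf_trm N U" "wf_trm N \<psi>" "\<And>i. i < k \<Longrightarrow> red_trm N (App \<psi> (num i)) (\<xi> i)"
  shows "realizes_bot N (App U \<psi>)"
  unfolding realizes_bot_def
proof (intro allI impI)
  fix \<pi> assume "wf_stack N \<pi>"
  with assms(3-5) show "in_pole (App U \<psi>, \<pi>)"
    by (intro in_pole_if_sim_bounded_run[OF bounded_run_phi _ not_pure_phi assms(2,1)])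
       (auto intro: sim.intros sim_stack.Nil)
qed

theorem theorem2:
  fixes N :: nat and \<xi> :: "nat \<Rightarrow> trm"
  assumes "\<And>i. wf_trm N (\<xi> i)"
  shows "\<exists>\<phi>. wf_trm N \<phi>
     \<and> (\<forall>i. red_trm N (App \<phi> (num i)) (\<xi> i))
     \<and> (\<forall>U. wf_trm N U \<and> realizes_bot N (App U \<phi>) \<longrightarrow>
          (\<exists>k. \<forall>\<psi>. wf_trm N \<psi> \<and> (\<forall>i<k. red_trm N (App \<psi> (num i)) (\<xi> i))
                 \<longrightarrow> realizes_bot N (App U \<psi>)))"
proof (intro exI[of _ "phi N \<xi>"] conjI allI impI)
  show "wf_trm N (phi N \<xi>)" using wf_phi assms by blast
  fix i show "red_trm N (App (phi N \<xi>) (num i)) (\<xi> i)"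
    unfolding red_trm_def using exec_phi_num by blast
next
  fix U assume U: "wf_trm N U \<and> realizes_bot N (App U (phi N \<xi>))"
  then obtain k n where "bounded_run k n (App U (phi N \<xi>), [])"
    using bounded_run_if_realizes_bot by blast
  with U assms show "\<exists>k. \<forall>\<psi>. wf_trm N \<psi> \<and> (\<forall>i<k. red_trm N (App \<psi> (num i)) (\<xi> i))
                 \<longrightarrow> realizes_bot N (App U \<psi>)"
    by (blast intro: realizes_bot_App_if_bounded_run)
qed

end
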